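(* In the Data Revocation Game: (1) The profile $d_i^*=0$ for all $i\in\mathcal I$ is a Nash equilibrium if and only if $$\epsilon_i\ge\Big(\xi_i\ell_i+\theta_i\sum_{j\in\mathcal I,\,j\ne i}\ell_j^2\Big)^{-1}\quad\text{for all } i\in\mathcal I.$$ (2) The profile $d_i^*=d_i^{\max}$ for all $i\in\mathcal I$ is a Nash equilibrium if and only if $$\epsilon_i\le(\xi_i\ell_i)^{-1}-\sum_{j\in\mathcal I}d_j^{\max}\quad\text{for all } i\in\mathcal I.$$
   Context: Data Revocation Game: a finite set of users $\mathcal I=\{1,\dots,I\}$, $I\ge 2$. Each user $i$ has parameters $d_i^{\max}>0$, $\epsilon_i>0$, $\xi_i>0$, $\ell_i>0$, $\theta_i\ge 0$. Each user chooses $d_i\in[0,d_i^{\max}]$. Payoff $$U_i(d_i,\boldsymbol{d_{-i}})=\ln\Big(\sum_{j\in\mathcal I}d_j+\epsilon_i\Big)-\xi_i d_i\ell_i-\theta_i d_i\sum_{j\neq i}\Big(1-\frac{d_j}{d_j^{\max}}\Big)\ell_j^2 .$$ A Nash equilibrium is a profile $(d_i^* )$ with $d_i^*\in[0,d_i^{\max}]$ and $U_i(d_i^*,\boldsymbol{d_{-i}^*})\ge U_i(d_i,\boldsymbol{d_{-i}^*})$ for all $i$ and all $d_i\in[0,d_i^{\max}]$. *)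

theory Defs
  imports Complex_Main
begin

definition payoff ::
  "'a set \<Rightarrow> ('a \<Rightarrow> real) \<Rightarrow> ('a \<Rightarrow> real) \<Rightarrow> ('a \<Rightarrow> real) \<Rightarrow> ('a \<Rightarrow> real)
   \<Rightarrow> ('a \<Rightarrow> real) \<Rightarrow> ('a \<Rightarrow> real) \<Rightarrow> 'a \<Rightarrow> real" where
  "payoff I dmax eps xi l theta d i =
     ln ((\<Sum>j\<in>I. d j) + eps i) - xi i * d i * l i
     - theta i * d i * (\<Sum>j\<in>I - {i}. (1 - d j / dmax j) * (l j)\<^sup>2)"

definition nash_eq ::
  "'a set \<Rightarrow> ('a \<Rightarrow> real) \<Rightarrow> ('a \<Rightarrow> real) \<Rightarrow> ('a \<Rightarrow> real) \<Rightarrow> ('a \<Rightarrow> real)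
   \<Rightarrow> ('a \<Rightarrow> real) \<Rightarrow> ('a \<Rightarrow> real) \<Rightarrow> bool" where
  "nash_eq I dmax eps xi l theta d \<longleftrightarrow>
     (\<forall>i\<in>I. 0 \<le> d i \<and> d i \<le> dmax i) \<and>
     (\<forall>i\<in>I. \<forall>x. 0 \<le> x \<and> x \<le> dmax i \<longrightarrow>
        payoff I dmax eps xi l theta d i \<ge> payoff I dmax eps xi l theta (d(i := x)) i)"

end

theory Submission
  imports Defs
begin

text \<open>
  Against the all-zero and the all-maximal profile, a unilateral deviation of user \<open>i\<close> to
  \<open>x \<in> [0, d\<^sub>i\<^sup>max]\<close> yields a payoff of the form \<open>ln (b + x) - c x\<close>: the
  congestion term is linear in \<open>x\<close> because the revocation of the other users is frozen.
  This function is concave, so a boundary point of \<open>[0, d\<^sub>i\<^sup>max]\<close> is a best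
  response exactly when the derivative \<open>1 / (b + x) - c\<close> there points into the interval;
  that is the stated condition on \<open>\<epsilon>\<^sub>i\<close> in both cases.
\<close>

lemma ln_le_tangent:
  fixes x y :: real
  assumes "0 < x" "0 < y"
  shows "ln x \<le> ln y + (x - y) / y"
proof -
  have "ln (x / y) \<le> x / y - 1"
    using assms by (intro ln_le_minus_one) simp
  then show ?thesis
    using assms by (simp add: ln_div diff_divide_distrib)
qed

lemma ln_add_minus_linear_max_at_left_iff:
  fixes a b c :: real
  assumes "0 < a" "0 < b" "0 < c"
  shows "(\<forall>x\<in>{0..a}. ln (b + x) - c * x \<le> ln b) \<longleftrightarrow> 1 / c \<le> b"
proof
  assume max: "\<forall>x\<in>{0..a}. ln (b + x) - c * x \<le> ln b"
  show "1 / c \<le> b"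
  proof (rule ccontr)
    assume "\<not> 1 / c \<le> b"
    then have "c * b < 1"
      using assms by (simp add: field_simps)
    then have "\<forall>\<^sub>F x in at_right 0. c * (b + x) < 1"
      by (intro order_tendstoD(2)) (auto intro!: tendsto_eq_intros)
    moreover have "\<forall>\<^sub>F x in at_right 0. x \<in> {0<..<a}"
      using assms(1) by (rule eventually_at_right_real)
    ultimately have "\<forall>\<^sub>F x in at_right 0. c * (b + x) < 1 \<and> x \<in> {0<..<a}"
      by (rule eventually_conj)
    then obtain x where x: "c * (b + x) < 1" "0 < x" "x < a"
      using eventually_happens'[OF trivial_limit_at_right_real] by auto
    have "x * (c * (b + x)) < x * 1"
      using x by (intro mult_strict_left_mono) auto
    then have "c * x < x / (b + x)"
      using x assms by (simp add: field_simps)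
    also have "x / (b + x) \<le> ln (b + x) - ln b"
      using ln_le_tangent[of b "b + x"] x assms by (simp add: field_simps)
    finally have "ln b < ln (b + x) - c * x"
      by simp
    moreover have "x \<in> {0..a}"
      using x by simp
    ultimately show False
      using max by fastforce
  qed
next
  assume "1 / c \<le> b"
  then have "1 \<le> c * b"
    using assms by (simp add: field_simps)
  show "\<forall>x\<in>{0..a}. ln (b + x) - c * x \<le> ln b"
  proof
    fix x assume x: "x \<in> {0..a}"
    have "ln (b + x) \<le> ln b + x / b"
      using ln_le_tangent[of "b + x" b] x assms by simp
    also have "x / b \<le> c * x"
    proof -
      have "x * 1 \<le> x * (c * b)"
        using x \<open>1 \<le> c * b\<close> by (intro mult_left_mono) auto
      then show ?thesis
        using assms by (simp add: divide_le_eq algebra_simps)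
    qed
    finally show "ln (b + x) - c * x \<le> ln b"
      by simp
  qed
qed

lemma ln_add_minus_linear_max_at_right_iff:
  fixes a b c :: real
  assumes "0 < a" "0 < b" "0 < c"
  shows "(\<forall>x\<in>{0..a}. ln (b + x) - c * x \<le> ln (b + a) - c * a) \<longleftrightarrow> b + a \<le> 1 / c"
proof
  assume max: "\<forall>x\<in>{0..a}. ln (b + x) - c * x \<le> ln (b + a) - c * a"
  show "b + a \<le> 1 / c"
  proof (rule ccontr)
    assume "\<not> b + a \<le> 1 / c"
    then have "1 < c * (b + a)"
      using assms by (simp add: field_simps)
    then have "\<forall>\<^sub>F x in at_left a. 1 < c * (b + x)"
      by (intro order_tendstoD(1)) (auto intro!: tendsto_eq_intros)
    moreover have "\<forall>\<^sub>F x in at_left a. x \<in> {0<..<a}"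
      using assms(1) by (rule eventually_at_left_real)
    ultimately have "\<forall>\<^sub>F x in at_left a. 1 < c * (b + x) \<and> x \<in> {0<..<a}"
      by (rule eventually_conj)
    then obtain x where x: "1 < c * (b + x)" "0 < x" "x < a"
      using eventually_happens'[OF trivial_limit_at_left_real] by auto
    have "(a - x) * 1 < (a - x) * (c * (b + x))"
      using x by (intro mult_strict_left_mono) auto
    then have "(a - x) / (b + x) < c * (a - x)"
      using x assms by (simp add: field_simps)
    moreover have "ln (b + a) - ln (b + x) \<le> (a - x) / (b + x)"
      using ln_le_tangent[of "b + a" "b + x"] x assms by simp
    ultimately have "ln (b + a) - c * a < ln (b + x) - c * x"
      by (simp add: algebra_simps)
    moreover have "x \<in> {0..a}"
      using x by simp
    ultimately show False
      using max by fastforce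
  qed
next
  assume "b + a \<le> 1 / c"
  then have "c * (b + a) \<le> 1"
    using assms by (simp add: field_simps)
  show "\<forall>x\<in>{0..a}. ln (b + x) - c * x \<le> ln (b + a) - c * a"
  proof
    fix x assume x: "x \<in> {0..a}"
    have "ln (b + x) \<le> ln (b + a) + (x - a) / (b + a)"
      using ln_le_tangent[of "b + x" "b + a"] x assms by simp
    also have "(x - a) / (b + a) \<le> c * (x - a)"
    proof -
      have "(x - a) * 1 \<le> (x - a) * (c * (b + a))"
        using x \<open>c * (b + a) \<le> 1\<close> by (intro mult_left_mono_neg) auto
      moreover have "0 < b + a"
        using assms by simp
      ultimately show ?thesis
        by (simp add: pos_divide_le_eq mult_ac)
    qed
    finally show "ln (b + x) - c * x \<le> ln (b + a) - c * a"
      by (simp add: algebra_simps)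
  qed
qed

lemma payoff_deviation_from_zero:
  assumes "finite I" "i \<in> I"
  shows "payoff I dmax eps xi l theta ((\<lambda>_. 0)(i := x)) i
      = ln (eps i + x) - (xi i * l i + theta i * (\<Sum>j\<in>I - {i}. (l j)\<^sup>2)) * x"
proof -
  have "(\<Sum>j\<in>I. ((\<lambda>_. 0)(i := x)) j) = x"
    using assms by (simp add: sum.delta)
  moreover have "(\<Sum>j\<in>I - {i}. (1 - ((\<lambda>_. 0)(i := x)) j / dmax j) * (l j)\<^sup>2)
      = (\<Sum>j\<in>I - {i}. (l j)\<^sup>2)"
    by (rule sum.cong) auto
  ultimately show ?thesis
    unfolding payoff_def by (simp add: algebra_simps)
qed

lemma payoff_deviation_from_max:
  assumes "finite I" "i \<in> I" "\<And>j. j \<in> I \<Longrightarrow> dmax j \<noteq> 0"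
  shows "payoff I dmax eps xi l theta (dmax(i := x)) i
      = ln ((\<Sum>j\<in>I - {i}. dmax j) + eps i + x) - xi i * l i * x"
proof -
  have "(\<Sum>j\<in>I. (dmax(i := x)) j) = x + (\<Sum>j\<in>I - {i}. (dmax(i := x)) j)"
    using assms(1,2) by (simp add: sum.remove)
  also have "(\<Sum>j\<in>I - {i}. (dmax(i := x)) j) = (\<Sum>j\<in>I - {i}. dmax j)"
    by (rule sum.cong) auto
  finally have "(\<Sum>j\<in>I. (dmax(i := x)) j) = (\<Sum>j\<in>I - {i}. dmax j) + x"
    by simp
  moreover have "(\<Sum>j\<in>I - {i}. (1 - (dmax(i := x)) j / dmax j) * (l j)\<^sup>2) = 0"
    using assms(3) by (intro sum.neutral) auto
  ultimately show ?thesis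
    unfolding payoff_def by (simp add: algebra_simps)
qed

lemma nash_eq_iff_no_profitable_deviation:
  assumes "\<forall>i\<in>I. 0 \<le> d i \<and> d i \<le> dmax i"
  shows "nash_eq I dmax eps xi l theta d \<longleftrightarrow>
    (\<forall>i\<in>I. \<forall>x\<in>{0..dmax i}.
       payoff I dmax eps xi l theta (d(i := x)) i \<le> payoff I dmax eps xi l theta d i)"
  using assms unfolding nash_eq_def by auto

lemma zero_profile_best_response_iff:
  assumes "finite I" "i \<in> I" "0 < dmax i" "0 < eps i" "0 < xi i" "0 < l i" "0 \<le> theta i"
  shows "(\<forall>x\<in>{0..dmax i}.
      payoff I dmax eps xi l theta ((\<lambda>_. 0)(i := x)) i \<le> payoff I dmax eps xi l theta (\<lambda>_. 0) i)
    \<longleftrightarrow> 1 / (xi i * l i + theta i * (\<Sum>j\<in>I - {i}. (l j)\<^sup>2)) \<le> eps i"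
proof -
  have "0 < xi i * l i + theta i * (\<Sum>j\<in>I - {i}. (l j)\<^sup>2)"
    using assms(5-7) by (intro add_pos_nonneg mult_nonneg_nonneg sum_nonneg) auto
  moreover have "payoff I dmax eps xi l theta (\<lambda>_. 0) i = ln (eps i)"
    using payoff_deviation_from_zero[OF assms(1,2), where x=0] by (simp add: fun_upd_idem)
  ultimately show ?thesis
    using ln_add_minus_linear_max_at_left_iff assms(3,4)
    by (simp add: payoff_deviation_from_zero[OF assms(1,2)])
qed

lemma max_profile_best_response_iff:
  assumes "finite I" "i \<in> I" "\<And>j. j \<in> I \<Longrightarrow> 0 < dmax j" "0 < eps i" "0 < xi i" "0 < l i"
  shows "(\<forall>x\<in>{0..dmax i}.
      payoff I dmax eps xi l theta (dmax(i := x)) i \<le> payoff I dmax eps xi l theta dmax i)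
    \<longleftrightarrow> eps i \<le> 1 / (xi i * l i) - (\<Sum>j\<in>I. dmax j)"
proof -
  define b where "b = (\<Sum>j\<in>I - {i}. dmax j) + eps i"
  have "\<And>j. j \<in> I \<Longrightarrow> dmax j \<noteq> 0"
    using assms(3) by force
  then have deviation: "payoff I dmax eps xi l theta (dmax(i := x)) i = ln (b + x) - xi i * l i * x"
    for x
    using payoff_deviation_from_max[of I i dmax eps xi l theta x] assms(1,2)
    by (simp add: b_def)
  have "payoff I dmax eps xi l theta dmax i = ln (b + dmax i) - xi i * l i * dmax i"
    using deviation[of "dmax i"] by simp
  moreover have "0 < b"
    unfolding b_def using assms(3,4)
    by (intro add_nonneg_pos sum_nonneg) (auto intro: less_imp_le)
  moreover have "b + dmax i = eps i + (\<Sum>j\<in>I. dmax j)"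
    unfolding b_def using assms(1,2) by (simp add: sum.remove)
  ultimately show ?thesis
    using ln_add_minus_linear_max_at_right_iff[of "dmax i" b "xi i * l i"] assms(2,3,5,6)
    by (simp add: deviation le_diff_eq)
qed

theorem proposition2:
  fixes I :: "'a set"
    and dmax eps xi l theta :: "'a \<Rightarrow> real"
  assumes "finite I" and "card I \<ge> 2"
    and "\<And>i. i \<in> I \<Longrightarrow> dmax i > 0"
    and "\<And>i. i \<in> I \<Longrightarrow> eps i > 0"
    and "\<And>i. i \<in> I \<Longrightarrow> xi i > 0"
    and "\<And>i. i \<in> I \<Longrightarrow> l i > 0"
    and "\<And>i. i \<in> I \<Longrightarrow> theta i \<ge> 0"
  shows "(nash_eq I dmax eps xi l theta (\<lambda>i. 0) \<longleftrightarrow>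
            (\<forall>i\<in>I. eps i \<ge> 1 / (xi i * l i + theta i * (\<Sum>j\<in>I - {i}. (l j)\<^sup>2))))
       \<and> (nash_eq I dmax eps xi l theta dmax \<longleftrightarrow>
            (\<forall>i\<in>I. eps i \<le> 1 / (xi i * l i) - (\<Sum>j\<in>I. dmax j)))"
proof
  have "\<forall>i\<in>I. 0 \<le> (0::real) \<and> 0 \<le> dmax i" "\<forall>i\<in>I. 0 \<le> dmax i \<and> dmax i \<le> dmax i"
    using assms(3) by (auto intro: less_imp_le)
  note nash_eq_iffs = nash_eq_iff_no_profitable_deviation[OF this(1)]
    nash_eq_iff_no_profitable_deviation[OF this(2)]
  show "nash_eq I dmax eps xi l theta (\<lambda>i. 0) \<longleftrightarrow>
      (\<forall>i\<in>I. eps i \<ge> 1 / (xi i * l i + theta i * (\<Sum>j\<in>I - {i}. (l j)\<^sup>2)))"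
    unfolding nash_eq_iffs(1) using zero_profile_best_response_iff[OF assms(1)] assms(3-7)
    by (intro ball_cong) auto
  show "nash_eq I dmax eps xi l theta dmax \<longleftrightarrow>
      (\<forall>i\<in>I. eps i \<le> 1 / (xi i * l i) - (\<Sum>j\<in>I. dmax j))"
    unfolding nash_eq_iffs(2) using max_profile_best_response_iff[OF assms(1)] assms(3-6)
    by (intro ball_cong) auto
qed

end
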